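(* Let $(F_S,\iota)$ be an embedded local étale algebra and let $\Gamma,\Gamma'\subseteq\mathrm{PGL}_2(F_S)$ be commensurable subgroups. Then $\mathcal L^S_{\Gamma'}=\mathcal L^S_\Gamma$.
   Context: Fix a prime $p$ and let $\mathbf{C}$ be the completion of an algebraic closure of $\mathbb{Q}_p$ or of $\mathbb{F}_p((T))$. An embedded local étale algebra $(F_S,\iota)$ consists of a finite non-empty set $S$, non-Archimedean local fields $F_\mathfrak p$ ($\mathfrak p\in S$) of residue characteristic $p$ and the same characteristic as $\mathbf C$, and embeddings $\iota_\mathfrak p\colon F_\mathfrak p\hookrightarrow\mathbf C$. $\mathrm{PGL}_2(F_S)=\prod_\mathfrak p\mathrm{PGL}_2(F_\mathfrak p)$ acts componentwise via $\iota$ by Möbius transformations on $\mathbb P^1(\mathbf C_S)=\prod_{\mathfrak p\in S}\mathbb P^1(\mathbf C)$. For a subgroup $\Gamma$, $\mathcal L^S_\Gamma$ is the set of $x\in\mathbb P^1(\mathbf C_S)$ such that $\gamma_j(y)\to x$ for some $y\in\mathbb P^1(\mathbf C_S)$ and pairwise distinct $\gamma_j\in\Gamma$. *)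

theory Defs
  imports "HOL-Computational_Algebra.Polynomial" "HOL-Algebra.Coset"
begin

text \<open>C is modelled as a field type 'k equipped with an absolute value absv.
  The metric/topology on C is the one induced by absv.\<close>

definition abs_closure :: "('k::field \<Rightarrow> real) \<Rightarrow> 'k set \<Rightarrow> 'k set" where
  "abs_closure absv A = {z. \<forall>e>0. \<exists>a\<in>A. absv (z - a) < e}"

definition nonarch_abs :: "('k::field \<Rightarrow> real) \<Rightarrow> bool" where
  "nonarch_abs absv \<longleftrightarrow>
     (\<forall>x. 0 \<le> absv x) \<and> (\<forall>x. absv x = 0 \<longleftrightarrow> x = 0) \<and>
     (\<forall>x y. absv (x * y) = absv x * absv y) \<and>
     (\<forall>x y. absv (x + y) \<le> max (absv x) (absv y))"

definition abs_complete :: "('k::field \<Rightarrow> real) \<Rightarrow> bool" where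
  "abs_complete absv \<longleftrightarrow>
     (\<forall>X::nat \<Rightarrow> 'k. (\<forall>e>0. \<exists>N. \<forall>m\<ge>N. \<forall>n\<ge>N. absv (X m - X n) < e) \<longrightarrow>
        (\<exists>L. (\<lambda>n. absv (X n - L)) \<longlonglongrightarrow> 0))"

definition alg_closed_field :: "'k::field itself \<Rightarrow> bool" where
  "alg_closed_field _ \<longleftrightarrow> (\<forall>q::'k poly. 0 < degree q \<longrightarrow> (\<exists>z. poly q z = 0))"

definition algebraic_over :: "'k::field set \<Rightarrow> 'k set" where
  "algebraic_over K0 = {z. \<exists>q::'k poly. q \<noteq> 0 \<and> (\<forall>i. coeff q i \<in> K0) \<and> poly q z = 0}"

text \<open>Base field: closure of Q with |p|<1 (so it is Q_p) in characteristic 0,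
  or closure of F_p(t) with 0<|t|<1 (so it is F_p((t))) in characteristic p.\<close>
definition base_field :: "nat \<Rightarrow> ('k::field \<Rightarrow> real) \<Rightarrow> 'k set \<Rightarrow> bool" where
  "base_field p absv K0 \<longleftrightarrow>
     ((\<forall>n::nat. 0 < n \<longrightarrow> of_nat n \<noteq> (0::'k)) \<and> absv (of_nat p) < 1 \<and>
        K0 = abs_closure absv {of_int a / of_int b | a b. True})
   \<or> (of_nat p = (0::'k) \<and>
        (\<exists>t. 0 < absv t \<and> absv t < 1 \<and>
           K0 = abs_closure absv
             {poly (map_poly of_int f) t / poly (map_poly of_int g) t | f g. True}))"

definition is_C :: "nat \<Rightarrow> ('k::field \<Rightarrow> real) \<Rightarrow> bool" where
  "is_C p absv \<longleftrightarrow> prime p \<and> nonarch_abs absv \<and> abs_complete absv \<and>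
     alg_closed_field TYPE('k) \<and>
     (\<exists>K0. base_field p absv K0 \<and> abs_closure absv (algebraic_over K0) = UNIV)"

section \<open>Local fields embedded in C (identified with their images)\<close>

definition is_subfield :: "'k::field set \<Rightarrow> bool" where
  "is_subfield K \<longleftrightarrow> 0 \<in> K \<and> 1 \<in> K \<and> (\<forall>x\<in>K. \<forall>y\<in>K. x + y \<in> K \<and> x * y \<in> K) \<and>
     (\<forall>x\<in>K. - x \<in> K \<and> inverse x \<in> K)"

text \<open>A non-discrete locally compact subfield of C (w.r.t. the topology of absv):
  some closed ball around 0 in K is (sequentially) compact.\<close>
definition local_subfield :: "('k::field \<Rightarrow> real) \<Rightarrow> 'k set \<Rightarrow> bool" where
  "local_subfield absv K \<longleftrightarrow> is_subfield K \<and> (\<exists>x\<in>K. 0 < absv x \<and> absv x < 1) \<and>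
     (\<exists>r>0. \<forall>X::nat \<Rightarrow> 'k. (\<forall>n. X n \<in> K \<and> absv (X n) \<le> r) \<longrightarrow>
        (\<exists>f L. strict_mono f \<and> L \<in> K \<and> (\<lambda>n. absv (X (f n) - L)) \<longlonglongrightarrow> 0))"

type_synonym 'k mat2 = "'k \<times> 'k \<times> 'k \<times> 'k"  \<comment> \<open>(a,b,c,d) = [[a,b],[c,d]]\<close>

fun mat2_mult :: "'k::field mat2 \<Rightarrow> 'k mat2 \<Rightarrow> 'k mat2" where
  "mat2_mult (a,b,c,d) (a',b',c',d') =
     (a*a' + b*c', a*b' + b*d', c*a' + d*c', c*b' + d*d')"

definition GL2 :: "'k::field set \<Rightarrow> 'k mat2 set" where
  "GL2 K = {(a,b,c,d). a \<in> K \<and> b \<in> K \<and> c \<in> K \<and> d \<in> K \<and> a*d - b*c \<noteq> 0}"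

definition pgl_class :: "'k::field set \<Rightarrow> 'k mat2 \<Rightarrow> 'k mat2 set" where
  "pgl_class K M = (case M of (a,b,c,d) \<Rightarrow> {(s*a, s*b, s*c, s*d) | s. s \<in> K \<and> s \<noteq> 0})"

definition PGL2 :: "'k::field set \<Rightarrow> 'k mat2 set set" where
  "PGL2 K = pgl_class K ` GL2 K"

definition pgl_mult :: "'k::field mat2 set \<Rightarrow> 'k mat2 set \<Rightarrow> 'k mat2 set" where
  "pgl_mult A B = {mat2_mult M N | M N. M \<in> A \<and> N \<in> B}"

text \<open>PGL_2(F_S) = prod_{p in S} PGL_2(F_p), elements extensional (empty set outside S).\<close>
definition PGL2_S :: "'i set \<Rightarrow> ('i \<Rightarrow> 'k::field set) \<Rightarrow> ('i \<Rightarrow> 'k mat2 set) monoid" where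
  "PGL2_S S F =
     \<lparr> carrier = {g. (\<forall>i\<in>S. g i \<in> PGL2 (F i)) \<and> (\<forall>i. i \<notin> S \<longrightarrow> g i = {})},
       mult = (\<lambda>g h i. if i \<in> S then pgl_mult (g i) (h i) else {}),
       one = (\<lambda>i. if i \<in> S then pgl_class (F i) (1,0,0,1) else {}) \<rparr>"

definition commensurable :: "('g, 'm) monoid_scheme \<Rightarrow> 'g set \<Rightarrow> 'g set \<Rightarrow> bool" where
  "commensurable G H H' \<longleftrightarrow>
     finite {(H \<inter> H') #>\<^bsub>G\<^esub> h | h. h \<in> H} \<and> finite {(H \<inter> H') #>\<^bsub>G\<^esub> h | h. h \<in> H'}"

text \<open>P^1(C) = 'k option, None being the point at infinity.\<close>
fun mobius :: "'k::field mat2 \<Rightarrow> 'k option \<Rightarrow> 'k option" where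
  "mobius (a,b,c,d) (Some z) = (if c*z + d = 0 then None else Some ((a*z + b) / (c*z + d)))"
| "mobius (a,b,c,d) None = (if c = 0 then None else Some (a / c))"

definition pgl_act :: "'k::field mat2 set \<Rightarrow> 'k option \<Rightarrow> 'k option" where
  "pgl_act A z = mobius (SOME M. M \<in> A) z"

text \<open>Points of P^1(C_S) = prod_{p in S} P^1(C), extensional (None outside S).\<close>
definition P1_S :: "'i set \<Rightarrow> ('i \<Rightarrow> 'k option) set" where
  "P1_S S = {x. \<forall>i. i \<notin> S \<longrightarrow> x i = None}"

definition act_S :: "'i set \<Rightarrow> ('i \<Rightarrow> 'k::field mat2 set) \<Rightarrow> ('i \<Rightarrow> 'k option) \<Rightarrow> ('i \<Rightarrow> 'k option)" where
  "act_S S g x = (\<lambda>i. if i \<in> S then pgl_act (g i) (x i) else None)"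

text \<open>Chordal metric on P^1(C) (non-Archimedean version); it induces the usual topology.\<close>
fun chordal :: "('k::field \<Rightarrow> real) \<Rightarrow> 'k option \<Rightarrow> 'k option \<Rightarrow> real" where
  "chordal absv (Some z) (Some w) = absv (z - w) / (max 1 (absv z) * max 1 (absv w))"
| "chordal absv (Some z) None = 1 / max 1 (absv z)"
| "chordal absv None (Some w) = 1 / max 1 (absv w)"
| "chordal absv None None = 0"

definition conv_S :: "'i set \<Rightarrow> ('k::field \<Rightarrow> real) \<Rightarrow> (nat \<Rightarrow> 'i \<Rightarrow> 'k option) \<Rightarrow> ('i \<Rightarrow> 'k option) \<Rightarrow> bool" where
  "conv_S S absv xs x \<longleftrightarrow> (\<forall>i\<in>S. (\<lambda>j. chordal absv (xs j i) (x i)) \<longlonglongrightarrow> 0)"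

definition limit_set :: "'i set \<Rightarrow> ('k::field \<Rightarrow> real) \<Rightarrow> ('i \<Rightarrow> 'k mat2 set) set \<Rightarrow> ('i \<Rightarrow> 'k option) set" where
  "limit_set S absv \<Gamma> = {x \<in> P1_S S. \<exists>y \<in> P1_S S. \<exists>\<gamma>::nat \<Rightarrow> ('i \<Rightarrow> 'k mat2 set).
      (\<forall>j. \<gamma> j \<in> \<Gamma>) \<and> inj \<gamma> \<and> conv_S S absv (\<lambda>j. act_S S (\<gamma> j) y) x}"

end

theory Submission
  imports Defs "HOL-Library.Infinite_Set"
begin

text \<open>If H has only finitely many right cosets in \<Gamma>, then a sequence of pairwise
  distinct elements \<gamma> j of \<Gamma> has a subsequence lying in a single coset H h, so that
  \<gamma> j = k j h with pairwise distinct k j \<in> H and \<gamma> j y = k j (h y). Hence every limit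
  point of \<Gamma> is a limit point of H; the converse inclusion is trivial for H \<subseteq> \<Gamma>.
  Applying this to H = \<Gamma> \<inter> \<Gamma>', of finite index in both groups, gives the theorem.
  The only computation is that the Moebius action of PGL(2), defined through an arbitrary
  matrix representative of a class, is well defined and multiplicative; of the fields
  F i only their being subfields is used, and nothing about C.\<close>

lemma mobius_scale:
  fixes s :: "'k::field"
  assumes "s \<noteq> 0"
  shows "mobius (s*a, s*b, s*c, s*d) z = mobius (a,b,c,d) z"
proof (cases z)
  case (Some w)
  have "s*c*w + s*d = s*(c*w + d)" "s*a*w + s*b = s*(a*w + b)"
    by (simp_all add: algebra_simps)
  then show ?thesis using assms Some by simp
qed (use assms in simp)

lemma mobius_mat2_mult:
  fixes a b c d a' b' c' d' :: "'k::field"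
  assumes det: "a'*d' - b'*c' \<noteq> 0"
  shows "mobius (mat2_mult (a,b,c,d) (a',b',c',d')) z = mobius (a,b,c,d) (mobius (a',b',c',d') z)"
proof (cases z)
  case None
  show ?thesis
  proof (cases "c' = 0")
    case True
    then have "a' \<noteq> 0" using det by auto
    then show ?thesis using None True by (simp add: field_simps)
  next
    case False
    have "c*a' + d*c' = c'*(c*(a'/c') + d)" "a*a' + b*c' = c'*(a*(a'/c') + b)"
      using False by (simp_all add: field_simps)
    then show ?thesis using None False by simp
  qed
next
  case (Some w)
  have num: "(a*a' + b*c')*w + (a*b' + b*d') = a*(a'*w + b') + b*(c'*w + d')"
   and den: "(c*a' + d*c')*w + (c*b' + d*d') = c*(a'*w + b') + d*(c'*w + d')"
    by (simp_all add: algebra_simps)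
  show ?thesis
  proof (cases "c'*w + d' = 0")
    case True
    have "a'*d' - b'*c' = a'*(c'*w + d') - c'*(a'*w + b')"
      by (simp add: algebra_simps)
    then have "a'*w + b' \<noteq> 0" using det True by auto
    then show ?thesis using Some True num den by simp
  next
    case False
    define u where "u = (a'*w + b')/(c'*w + d')"
    have "a'*w + b' = (c'*w + d')*u" using False unfolding u_def by simp
    then have "c*(a'*w + b') + d*(c'*w + d') = (c'*w + d')*(c*u + d)"
      "a*(a'*w + b') + b*(c'*w + d') = (c'*w + d')*(a*u + b)"
      by (simp_all add: algebra_simps)
    then show ?thesis using Some False num den by (simp add: u_def[symmetric])
  qed
qed

lemma pgl_act_pgl_class:
  assumes "1 \<in> K"
  shows "pgl_act (pgl_class K (a,b,c,d)) z = mobius (a,b,c,d) z"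
proof -
  have "(a,b,c,d) \<in> pgl_class K (a,b,c,d)"
    using assms unfolding pgl_class_def by force
  then have "(SOME M. M \<in> pgl_class K (a,b,c,d)) \<in> pgl_class K (a,b,c,d)"
    by (rule someI)
  then obtain s where "s \<noteq> 0" "(SOME M. M \<in> pgl_class K (a,b,c,d)) = (s*a,s*b,s*c,s*d)"
    unfolding pgl_class_def by auto
  then show ?thesis using mobius_scale[of s a b c d z] by (simp add: pgl_act_def)
qed

lemma pgl_act_pgl_mult:
  assumes "1 \<in> K" and "A \<in> PGL2 K" and "B \<in> PGL2 K"
  shows "pgl_act (pgl_mult A B) z = pgl_act A (pgl_act B z)"
proof -
  obtain a b c d where A: "A = pgl_class K (a,b,c,d)"
    using assms(2) unfolding PGL2_def by auto
  obtain a' b' c' d' where B: "B = pgl_class K (a',b',c',d')" and "(a',b',c',d') \<in> GL2 K"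
    using assms(3) unfolding PGL2_def by auto
  then have det: "a'*d' - b'*c' \<noteq> 0" unfolding GL2_def by auto
  have "(a,b,c,d) \<in> A" "(a',b',c',d') \<in> B"
    using assms(1) unfolding A B pgl_class_def by (auto intro!: exI[of _ 1])
  then have "mat2_mult (a,b,c,d) (a',b',c',d') \<in> pgl_mult A B"
    unfolding pgl_mult_def by blast
  then have "(SOME P. P \<in> pgl_mult A B) \<in> pgl_mult A B" by (rule someI)
  then obtain s t where st: "s \<noteq> 0" "t \<noteq> 0"
    and P: "(SOME P. P \<in> pgl_mult A B) = mat2_mult (s*a,s*b,s*c,s*d) (t*a',t*b',t*c',t*d')"
    unfolding pgl_mult_def A B pgl_class_def by blast
  have "mat2_mult (s*a,s*b,s*c,s*d) (t*a',t*b',t*c',t*d') =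
    ((s*t)*(a*a' + b*c'), (s*t)*(a*b' + b*d'), (s*t)*(c*a' + d*c'), (s*t)*(c*b' + d*d'))"
    by (simp add: algebra_simps)
  then have "pgl_act (pgl_mult A B) z = mobius (mat2_mult (a,b,c,d) (a',b',c',d')) z"
    using st mobius_scale[of "s*t"] by (simp add: pgl_act_def P)
  also have "\<dots> = mobius (a,b,c,d) (mobius (a',b',c',d') z)"
    using mobius_mat2_mult det by blast
  finally show ?thesis using pgl_act_pgl_class[OF assms(1)] unfolding A B by simp
qed

lemma pgl_mult_one_left:
  assumes K: "is_subfield K" and "B \<in> PGL2 K"
  shows "pgl_mult (pgl_class K (1,0,0,1)) B = B"
proof -
  obtain a b c d where B: "B = pgl_class K (a,b,c,d)"
    using assms(2) unfolding PGL2_def by auto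
  have K_mult: "s*t \<in> K" if "s \<in> K" "t \<in> K" for s t
    using K that unfolding is_subfield_def by auto
  have one: "(1,0,0,1) \<in> pgl_class K (1,0,0,1)"
    using K unfolding is_subfield_def pgl_class_def by force
  have scale: "mat2_mult (s*1,s*0,s*0,s*1) (t*a,t*b,t*c,t*d) = ((s*t)*a,(s*t)*b,(s*t)*c,(s*t)*d)"
    for s t by (simp add: algebra_simps)
  show ?thesis
  proof
    show "pgl_mult (pgl_class K (1,0,0,1)) B \<subseteq> B"
      unfolding pgl_mult_def B pgl_class_def using scale K_mult by fastforce
    show "B \<subseteq> pgl_mult (pgl_class K (1,0,0,1)) B"
    proof
      fix P assume "P \<in> B"
      moreover have "mat2_mult (1,0,0,1) P = P" by (cases P) simp
      ultimately show "P \<in> pgl_mult (pgl_class K (1,0,0,1)) B"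
        unfolding pgl_mult_def using one by (metis (mono_tags, lifting) mem_Collect_eq)
    qed
  qed
qed

lemma act_S_PGL2_S_mult:
  assumes "\<forall>i\<in>S. 1 \<in> F i"
    and "g \<in> carrier (PGL2_S S F)" and "h \<in> carrier (PGL2_S S F)"
  shows "act_S S (g \<otimes>\<^bsub>PGL2_S S F\<^esub> h) y = act_S S g (act_S S h y)"
proof
  fix i
  show "act_S S (g \<otimes>\<^bsub>PGL2_S S F\<^esub> h) y i = act_S S g (act_S S h y) i"
  proof (cases "i \<in> S")
    case True
    then have "g i \<in> PGL2 (F i)" "h i \<in> PGL2 (F i)" "1 \<in> F i"
      using assms unfolding PGL2_S_def by auto
    then show ?thesis using True pgl_act_pgl_mult unfolding act_S_def PGL2_S_def by simp
  qed (simp add: act_S_def)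
qed

lemma PGL2_S_one_mult:
  assumes "\<forall>i\<in>S. is_subfield (F i)" and "g \<in> carrier (PGL2_S S F)"
  shows "\<one>\<^bsub>PGL2_S S F\<^esub> \<otimes>\<^bsub>PGL2_S S F\<^esub> g = g"
proof
  fix i
  show "(\<one>\<^bsub>PGL2_S S F\<^esub> \<otimes>\<^bsub>PGL2_S S F\<^esub> g) i = g i"
  proof (cases "i \<in> S")
    case True
    then have "g i \<in> PGL2 (F i)" "is_subfield (F i)"
      using assms unfolding PGL2_S_def by auto
    then show ?thesis using True pgl_mult_one_left unfolding PGL2_S_def by simp
  qed (use assms(2) in \<open>simp add: PGL2_S_def\<close>)
qed

lemma finite_range_imp_constant_subseq:
  assumes "finite (range c)"
  obtains e :: "nat \<Rightarrow> nat" and C where "strict_mono e" "\<And>n. c (e n) = C"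
proof -
  obtain C where "infinite (c -` {C})"
    using inf_img_fin_dom[OF assms] by auto
  then obtain e :: "nat \<Rightarrow> nat" where "strict_mono e" "\<And>n. e n \<in> c -` {C}"
    using infinite_enumerate by blast
  then show ?thesis using that by simp
qed

lemma conv_S_subseq:
  assumes "conv_S S absv xs x" and "strict_mono e"
  shows "conv_S S absv (xs \<circ> e) x"
  using assms LIMSEQ_subseq_LIMSEQ unfolding conv_S_def comp_def by fastforce

lemma limit_set_mono:
  assumes "H \<subseteq> \<Gamma>"
  shows "limit_set S absv H \<subseteq> limit_set S absv \<Gamma>"
  using assms unfolding limit_set_def by blast

lemma limit_set_subset_finite_index:
  assumes subfields: "\<forall>i\<in>S. is_subfield (F i)"
    and H: "H \<subseteq> carrier (PGL2_S S F)" "\<one>\<^bsub>PGL2_S S F\<^esub> \<in> H"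
    and \<Gamma>: "\<Gamma> \<subseteq> carrier (PGL2_S S F)"
    and fin: "finite {H #>\<^bsub>PGL2_S S F\<^esub> h | h. h \<in> \<Gamma>}"
  shows "limit_set S absv \<Gamma> \<subseteq> limit_set S absv H"
proof
  let ?G = "PGL2_S S F"
  fix x assume "x \<in> limit_set S absv \<Gamma>"
  then obtain y \<gamma> where x: "x \<in> P1_S S" and \<gamma>: "\<And>j. \<gamma> j \<in> \<Gamma>" "inj \<gamma>"
    and conv: "conv_S S absv (\<lambda>j. act_S S (\<gamma> j) y) x"
    unfolding limit_set_def by blast
  have "range (\<lambda>j. H #>\<^bsub>?G\<^esub> \<gamma> j) \<subseteq> {H #>\<^bsub>?G\<^esub> h | h. h \<in> \<Gamma>}" using \<gamma> by auto
  then have "finite (range (\<lambda>j. H #>\<^bsub>?G\<^esub> \<gamma> j))" using fin by (rule finite_subset)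
  then obtain e :: "nat \<Rightarrow> nat" and C where e: "strict_mono e" "\<And>n. H #>\<^bsub>?G\<^esub> \<gamma> (e n) = C"
    using finite_range_imp_constant_subseq by blast
  have \<gamma>_in_coset: "\<gamma> j \<in> H #>\<^bsub>?G\<^esub> \<gamma> j" for j
  proof -
    have "\<one>\<^bsub>?G\<^esub> \<otimes>\<^bsub>?G\<^esub> \<gamma> j = \<gamma> j"
      using PGL2_S_one_mult[OF subfields] \<gamma>(1) \<Gamma> by blast
    then show ?thesis using H(2) unfolding r_coset_def by force
  qed
  define h where "h = \<gamma> (e 0)"
  have "\<gamma> (e n) \<in> H #>\<^bsub>?G\<^esub> h" for n
    using \<gamma>_in_coset[of "e n"] e(2)[of n] e(2)[of 0] unfolding h_def by simp
  then have "\<exists>k\<in>H. \<gamma> (e n) = k \<otimes>\<^bsub>?G\<^esub> h" for n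
    unfolding r_coset_def by blast
  then obtain k where k: "\<And>n. k n \<in> H" "\<And>n. \<gamma> (e n) = k n \<otimes>\<^bsub>?G\<^esub> h" by metis
  have "inj k"
  proof
    fix m n assume "k m = k n"
    then have "e m = e n" using k(2) \<gamma>(2) by (metis inj_eq)
    then show "m = n" using e(1) by (simp add: strict_mono_eq)
  qed
  have one_in_F: "\<forall>i\<in>S. 1 \<in> F i" using subfields unfolding is_subfield_def by blast
  have "h \<in> carrier ?G" using \<gamma>(1) \<Gamma> unfolding h_def by blast
  then have "act_S S (\<gamma> (e n)) y = act_S S (k n) (act_S S h y)" for n
    unfolding k(2) using act_S_PGL2_S_mult[OF one_in_F] k(1) H(1) by blast
  then have "conv_S S absv (\<lambda>n. act_S S (k n) (act_S S h y)) x"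
    using conv_S_subseq[OF conv e(1)] by (simp add: comp_def)
  moreover have "act_S S h y \<in> P1_S S" unfolding P1_S_def act_S_def by simp
  ultimately show "x \<in> limit_set S absv H"
    unfolding limit_set_def using x k(1) \<open>inj k\<close> by blast
qed

theorem lemma2p4:
  fixes p :: nat and absv :: "'k::field \<Rightarrow> real"
    and S :: "'i set" and F :: "'i \<Rightarrow> 'k set"
    and \<Gamma> \<Gamma>' :: "('i \<Rightarrow> 'k mat2 set) set"
  assumes "is_C p absv"
    and "finite S" and "S \<noteq> {}"
    and "\<forall>i\<in>S. local_subfield absv (F i)"
    and "subgroup \<Gamma> (PGL2_S S F)" and "subgroup \<Gamma>' (PGL2_S S F)"
    and "commensurable (PGL2_S S F) \<Gamma> \<Gamma>'"
  shows "limit_set S absv \<Gamma>' = limit_set S absv \<Gamma>"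
proof -
  have subfields: "\<forall>i\<in>S. is_subfield (F i)" using assms(4) unfolding local_subfield_def by auto
  have \<Gamma>: "\<Gamma> \<subseteq> carrier (PGL2_S S F)" "\<one>\<^bsub>PGL2_S S F\<^esub> \<in> \<Gamma>"
    using assms(5) by (simp_all add: subgroup.subset subgroup.one_closed)
  have \<Gamma>': "\<Gamma>' \<subseteq> carrier (PGL2_S S F)" "\<one>\<^bsub>PGL2_S S F\<^esub> \<in> \<Gamma>'"
    using assms(6) by (simp_all add: subgroup.subset subgroup.one_closed)
  have fin: "finite {(\<Gamma> \<inter> \<Gamma>') #>\<^bsub>PGL2_S S F\<^esub> h | h. h \<in> \<Gamma>}"
    "finite {(\<Gamma> \<inter> \<Gamma>') #>\<^bsub>PGL2_S S F\<^esub> h | h. h \<in> \<Gamma>'}"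
    using assms(7) unfolding commensurable_def by auto
  have "limit_set S absv \<Gamma> = limit_set S absv (\<Gamma> \<inter> \<Gamma>')"
    using limit_set_subset_finite_index[OF subfields _ _ \<Gamma>(1) fin(1)] \<Gamma> \<Gamma>'
      limit_set_mono[of "\<Gamma> \<inter> \<Gamma>'" \<Gamma>] by blast
  moreover have "limit_set S absv \<Gamma>' = limit_set S absv (\<Gamma> \<inter> \<Gamma>')"
    using limit_set_subset_finite_index[OF subfields _ _ \<Gamma>'(1) fin(2)] \<Gamma> \<Gamma>'
      limit_set_mono[of "\<Gamma> \<inter> \<Gamma>'" \<Gamma>'] by blast
  ultimately show ?thesis by simp
qed

end
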